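(* Let $n\ge 3$ and let $C$ be a chain with vertices $1,\dots,n$ and positive weights $w_1,\dots,w_{n-1}$ (edge $\{i,i+1\}$ has weight $w_i$). Let $\lambda(C)=d^D(1,n)$, where $D$ is the real symmetric $n\times n$ matrix with $D_{i,i+1}=D_{i+1,i}=w_i^{-1}$ for $i=1,\dots,n-1$ and all other entries $0$. Let $f(b)=\sum_{i=1}^{n-1}w_ib_i$ for $b\in\mathbb{R}^{n-1}$ and define $$L_1(C)=\max\{f(b) : |b_i|^2+|b_{i+1}|^2\le 1\ \forall\,1\le i\le n-2\},\qquad L_2(C)=\max\Big\{f(b) : \sum_{i=1}^{n-1}|b_i|\le\frac n2\Big\},$$ $$R_1(C)=\max\{f(b) : |b_i|+|b_{i+1}|\le 1\ \forall\,1\le i\le n-2\},\qquad R_2(C)=\max\Big\{f(b) : |b_i|\le\frac{1}{2\cos\frac{\pi}{n+1}}\ \forall\,1\le i\le n-1\Big\}.$$ Then $$\max(R_1(C),R_2(C))\le\lambda(C)\le\min(L_1(C),L_2(C)),$$ and moreover $R_2(C)=\dfrac{\ell(C)}{2\cos\frac{\pi}{n+1}}$ and $L_2(C)=\dfrac n2\max_{1\le i\le n-1}w_i$, where $\ell(C)=\sum_{i=1}^{n-1}w_i$.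
   Context: For a self-adjoint $n\times n$ matrix $M$, $d^M(i,j)=\sup\{|a(i)-a(j)| : a\in\mathbb{C}^n,\ \|[M,\pi(a)]\|\le 1\}$, where $\pi(a)=\mathrm{diag}(a(1),\dots,a(n))$ and $\|\cdot\|$ is the operator norm. $\lambda(C)$ is called the noncommutative length of $C$ and $\ell(C)$ its geodesic length. *)

theory Defs
  imports "HOL-Analysis.Analysis"
begin

text \<open>n x n complex matrices are represented as functions nat => nat => complex,
  with indices ranging over {1..n}; vectors in C^n as nat => complex on {1..n}.\<close>

definition mat_mult :: "nat \<Rightarrow> (nat \<Rightarrow> nat \<Rightarrow> complex) \<Rightarrow> (nat \<Rightarrow> nat \<Rightarrow> complex) \<Rightarrow> nat \<Rightarrow> nat \<Rightarrow> complex" where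
  "mat_mult n A B = (\<lambda>i j. \<Sum>k=1..n. A i k * B k j)"

definition diag_mat :: "(nat \<Rightarrow> complex) \<Rightarrow> nat \<Rightarrow> nat \<Rightarrow> complex" where
  "diag_mat a = (\<lambda>i j. if i = j then a i else 0)"

definition commutator :: "nat \<Rightarrow> (nat \<Rightarrow> nat \<Rightarrow> complex) \<Rightarrow> (nat \<Rightarrow> nat \<Rightarrow> complex) \<Rightarrow> nat \<Rightarrow> nat \<Rightarrow> complex" where
  "commutator n A B = (\<lambda>i j. mat_mult n A B i j - mat_mult n B A i j)"

definition op_norm :: "nat \<Rightarrow> (nat \<Rightarrow> nat \<Rightarrow> complex) \<Rightarrow> real" where
  "op_norm n A = Sup {sqrt (\<Sum>i=1..n. (cmod (\<Sum>j=1..n. A i j * v j))\<^sup>2) | v.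
        (\<Sum>j=1..n. (cmod (v j))\<^sup>2) \<le> 1}"

definition dM :: "nat \<Rightarrow> (nat \<Rightarrow> nat \<Rightarrow> complex) \<Rightarrow> nat \<Rightarrow> nat \<Rightarrow> real" where
  "dM n M i j = Sup {cmod (a i - a j) | a. op_norm n (commutator n M (diag_mat a)) \<le> 1}"

definition chain_D :: "nat \<Rightarrow> (nat \<Rightarrow> real) \<Rightarrow> nat \<Rightarrow> nat \<Rightarrow> complex" where
  "chain_D n w = (\<lambda>i j.
     if 1 \<le> i \<and> i \<le> n - 1 \<and> j = i + 1 then complex_of_real (1 / w i)
     else if 1 \<le> j \<and> j \<le> n - 1 \<and> i = j + 1 then complex_of_real (1 / w j)
     else 0)"

definition nc_length :: "nat \<Rightarrow> (nat \<Rightarrow> real) \<Rightarrow> real" where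
  "nc_length n w = dM n (chain_D n w) 1 n"

definition geo_length :: "nat \<Rightarrow> (nat \<Rightarrow> real) \<Rightarrow> real" where
  "geo_length n w = (\<Sum>i=1..n-1. w i)"

definition fw :: "nat \<Rightarrow> (nat \<Rightarrow> real) \<Rightarrow> (nat \<Rightarrow> real) \<Rightarrow> real" where
  "fw n w b = (\<Sum>i=1..n-1. w i * b i)"

definition L1 :: "nat \<Rightarrow> (nat \<Rightarrow> real) \<Rightarrow> real" where
  "L1 n w = Sup {fw n w b | b. \<forall>i\<in>{1..n-2}. \<bar>b i\<bar>\<^sup>2 + \<bar>b (i+1)\<bar>\<^sup>2 \<le> 1}"

definition L2 :: "nat \<Rightarrow> (nat \<Rightarrow> real) \<Rightarrow> real" where
  "L2 n w = Sup {fw n w b | b. (\<Sum>i=1..n-1. \<bar>b i\<bar>) \<le> real n / 2}"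

definition R1 :: "nat \<Rightarrow> (nat \<Rightarrow> real) \<Rightarrow> real" where
  "R1 n w = Sup {fw n w b | b. \<forall>i\<in>{1..n-2}. \<bar>b i\<bar> + \<bar>b (i+1)\<bar> \<le> 1}"

definition R2 :: "nat \<Rightarrow> (nat \<Rightarrow> real) \<Rightarrow> real" where
  "R2 n w = Sup {fw n w b | b. \<forall>i\<in>{1..n-1}. \<bar>b i\<bar> \<le> 1 / (2 * cos (pi / (real n + 1)))}"

end

theory Submission
  imports Defs
begin

text \<open>Put \<open>c\<^sub>i = (a\<^sub>i\<^sub>+\<^sub>1 - a\<^sub>i) / w\<^sub>i\<close>. The commutator \<open>[D, \<pi>(a)]\<close> acts by
  \<open>(T v)\<^sub>i = c\<^sub>i v\<^sub>i\<^sub>+\<^sub>1 - c\<^sub>i\<^sub>-\<^sub>1 v\<^sub>i\<^sub>-\<^sub>1\<close>, and \<open>|a\<^sub>n - a\<^sub>1| \<le> f(|c|)\<close>, with equality when \<open>a\<close> is the real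
  primitive of a prescribed real slope vector \<open>c\<close>.
  Testing \<open>T\<close> on the basis vector \<open>e\<^sub>i\<^sub>+\<^sub>1\<close> gives \<open>|c\<^sub>i|\<^sup>2 + |c\<^sub>i\<^sub>+\<^sub>1|\<^sup>2 \<le> 1\<close>; testing it on a
  unimodular vector supported on the even sites, with phases aligned so that the two terms of
  each odd coordinate add up in modulus, gives \<open>\<Sum> |c\<^sub>i| \<le> n/2\<close>. These are the upper bounds
  \<open>L\<^sub>1\<close>, \<open>L\<^sub>2\<close>. Conversely, by the Schur test \<open>T\<close> is a contraction as soon as some positive
  \<open>x\<close> satisfies \<open>|c\<^sub>i| x\<^sub>i\<^sub>+\<^sub>1 + |c\<^sub>i\<^sub>-\<^sub>1| x\<^sub>i\<^sub>-\<^sub>1 \<le> x\<^sub>i\<close>. The weight \<open>x = 1\<close> covers the constraint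
  set of \<open>R\<^sub>1\<close>; the Perron eigenvector \<open>x\<^sub>i = sin (i \<pi> / (n + 1))\<close> of the path, with
  eigenvalue \<open>2 cos (\<pi> / (n + 1))\<close>, covers \<open>R\<^sub>2\<close>.\<close>

definition sqnorm :: "nat \<Rightarrow> (nat \<Rightarrow> complex) \<Rightarrow> real" where
  "sqnorm n v = (\<Sum>j=1..n. (cmod (v j))\<^sup>2)"

definition mat_vec :: "nat \<Rightarrow> (nat \<Rightarrow> nat \<Rightarrow> complex) \<Rightarrow> (nat \<Rightarrow> complex) \<Rightarrow> nat \<Rightarrow> complex" where
  "mat_vec n A v i = (\<Sum>j=1..n. A i j * v j)"

lemma sqnorm_nonneg: "0 \<le> sqnorm n v"
  by (simp add: sqnorm_def sum_nonneg)

lemma op_norm_eq_Sup: "op_norm n A = Sup {sqrt (sqnorm n (mat_vec n A v)) | v. sqnorm n v \<le> 1}"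
  by (simp add: op_norm_def sqnorm_def mat_vec_def)

lemma sqnorm_mat_vec_bounded: "\<exists>\<mu>\<ge>0. \<forall>v. sqnorm n (mat_vec n A v) \<le> \<mu>\<^sup>2 * sqnorm n v"
proof (intro exI allI conjI)
  let ?\<mu> = "sqrt (\<Sum>i=1..n. (\<Sum>j=1..n. cmod (A i j))\<^sup>2)"
  show "0 \<le> ?\<mu>" by (intro real_sqrt_ge_zero sum_nonneg) simp
  fix v
  have row: "cmod (mat_vec n A v i) \<le> (\<Sum>j=1..n. cmod (A i j)) * sqrt (sqnorm n v)" for i
  proof -
    have "cmod (v j) \<le> sqrt (sqnorm n v)" if "j \<in> {1..n}" for j
    proof -
      have "(cmod (v j))\<^sup>2 \<le> sqnorm n v"
        unfolding sqnorm_def using that by (intro member_le_sum) auto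
      then show ?thesis by (simp add: real_le_rsqrt)
    qed
    then have "(\<Sum>j=1..n. cmod (A i j * v j)) \<le> (\<Sum>j=1..n. cmod (A i j) * sqrt (sqnorm n v))"
      by (intro sum_mono) (simp add: norm_mult mult_left_mono)
    then show ?thesis
      unfolding mat_vec_def sum_distrib_right[symmetric] by (rule order_trans[OF norm_sum])
  qed
  have "sqnorm n (mat_vec n A v) \<le> (\<Sum>i=1..n. ((\<Sum>j=1..n. cmod (A i j)) * sqrt (sqnorm n v))\<^sup>2)"
    unfolding sqnorm_def[of n "mat_vec n A v"] using row by (intro sum_mono power_mono) auto
  also have "\<dots> = (\<Sum>i=1..n. (\<Sum>j=1..n. cmod (A i j))\<^sup>2) * sqnorm n v"
    by (simp add: power_mult_distrib sqnorm_nonneg sum_distrib_right[symmetric])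
  also have "\<dots> = ?\<mu>\<^sup>2 * sqnorm n v"
    by (simp add: sum_nonneg)
  finally show "sqnorm n (mat_vec n A v) \<le> ?\<mu>\<^sup>2 * sqnorm n v" .
qed

lemma sqnorm_scale: "sqnorm n (\<lambda>j. c * v j) = (cmod c)\<^sup>2 * sqnorm n v"
  by (simp add: sqnorm_def norm_mult power_mult_distrib sum_distrib_left)

lemma mat_vec_scale: "mat_vec n A (\<lambda>j. c * v j) = (\<lambda>i. c * mat_vec n A v i)"
  by (simp add: mat_vec_def fun_eq_iff sum_distrib_left algebra_simps)

lemma sqrt_sqnorm_mat_vec_le:
  assumes "0 \<le> \<mu>" and "\<And>v. sqnorm n (mat_vec n A v) \<le> \<mu>\<^sup>2 * sqnorm n v"
    and "sqnorm n v \<le> 1"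
  shows "sqrt (sqnorm n (mat_vec n A v)) \<le> \<mu>"
proof -
  have "sqnorm n (mat_vec n A v) \<le> \<mu>\<^sup>2"
    using assms(2)[of v] assms(3) by (meson mult_left_le order_trans zero_le_power2)
  then show ?thesis
    using assms(1) real_sqrt_le_mono by fastforce
qed

lemma op_norm_least:
  assumes "0 \<le> \<mu>" and "\<And>v. sqnorm n (mat_vec n A v) \<le> \<mu>\<^sup>2 * sqnorm n v"
  shows "op_norm n A \<le> \<mu>"
  unfolding op_norm_eq_Sup
proof (rule cSup_least)
  show "{sqrt (sqnorm n (mat_vec n A v)) | v. sqnorm n v \<le> 1} \<noteq> {}"
    by (auto intro!: exI[of _ "\<lambda>_. 0"] simp: sqnorm_def)
qed (use sqrt_sqnorm_mat_vec_le[OF assms] in blast)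

lemma bdd_above_op_norm_set: "bdd_above {sqrt (sqnorm n (mat_vec n A v)) | v. sqnorm n v \<le> 1}"
proof -
  obtain \<mu> where "0 \<le> \<mu>" "\<And>v. sqnorm n (mat_vec n A v) \<le> \<mu>\<^sup>2 * sqnorm n v"
    using sqnorm_mat_vec_bounded by blast
  then show ?thesis
    using sqrt_sqnorm_mat_vec_le by (intro bdd_aboveI[of _ \<mu>]) blast
qed

lemma op_norm_nonneg: "0 \<le> op_norm n A"
proof -
  have "sqrt (sqnorm n (mat_vec n A (\<lambda>_. 0))) \<le> op_norm n A"
    unfolding op_norm_eq_Sup by (intro cSup_upper bdd_above_op_norm_set) (auto simp: sqnorm_def)
  then show ?thesis by (simp add: mat_vec_def sqnorm_def)
qed

lemma sqnorm_mat_vec_le_op_norm: "sqnorm n (mat_vec n A v) \<le> (op_norm n A)\<^sup>2 * sqnorm n v"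
proof (cases "sqnorm n v = 0")
  case True
  obtain \<mu> where "\<And>v. sqnorm n (mat_vec n A v) \<le> \<mu>\<^sup>2 * sqnorm n v"
    using sqnorm_mat_vec_bounded by blast
  then show ?thesis using True by (metis antisym mult_zero_right sqnorm_nonneg)
next
  case False
  then have N: "sqnorm n v > 0" using sqnorm_nonneg order_less_le by metis
  define u where "u = (\<lambda>j. complex_of_real (1 / sqrt (sqnorm n v)) * v j)"
  have c: "(cmod (complex_of_real (1 / sqrt (sqnorm n v))))\<^sup>2 = 1 / sqnorm n v"
    by (simp only: norm_of_real power2_abs power_one_over real_sqrt_pow2[OF sqnorm_nonneg])
  have "sqnorm n u = 1"
    using N unfolding u_def sqnorm_scale c by simp
  then have "sqrt (sqnorm n (mat_vec n A u)) \<le> op_norm n A"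
    unfolding op_norm_eq_Sup by (intro cSup_upper bdd_above_op_norm_set) auto
  then have "sqnorm n (mat_vec n A u) \<le> (op_norm n A)\<^sup>2"
    by (rule sqrt_le_D)
  moreover have "sqnorm n (mat_vec n A u) = sqnorm n (mat_vec n A v) / sqnorm n v"
    unfolding u_def mat_vec_scale sqnorm_scale c by simp
  ultimately show ?thesis
    using N by (simp add: divide_le_eq)
qed

definition chain_comm :: "nat \<Rightarrow> (nat \<Rightarrow> real) \<Rightarrow> (nat \<Rightarrow> complex) \<Rightarrow> nat \<Rightarrow> nat \<Rightarrow> complex" where
  "chain_comm n w a = commutator n (chain_D n w) (diag_mat a)"

definition chain_slope :: "nat \<Rightarrow> (nat \<Rightarrow> real) \<Rightarrow> (nat \<Rightarrow> complex) \<Rightarrow> nat \<Rightarrow> complex" where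
  "chain_slope n w a i = (if 1 \<le> i \<and> i \<le> n - 1 then (a (i + 1) - a i) / complex_of_real (w i) else 0)"

definition chain_op :: "(nat \<Rightarrow> complex) \<Rightarrow> (nat \<Rightarrow> complex) \<Rightarrow> nat \<Rightarrow> complex" where
  "chain_op c v i = c i * v (i + 1) - c (i - 1) * v (i - 1)"

lemma commutator_diag_mat:
  assumes "i \<in> {1..n}" "j \<in> {1..n}"
  shows "commutator n M (diag_mat a) i j = M i j * (a j - a i)"
proof -
  have "mat_mult n M (diag_mat a) i j = M i j * a j"
    unfolding mat_mult_def diag_mat_def using assms
    by (simp add: if_distrib[where f="\<lambda>x. M i _ * x"] cong: if_cong)
  moreover have "mat_mult n (diag_mat a) M i j = a i * M i j"
    unfolding mat_mult_def diag_mat_def using assms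
    by (simp add: if_distrib[where f="\<lambda>x. x * M _ j"] cong: if_cong)
  ultimately show ?thesis
    by (simp add: commutator_def algebra_simps)
qed

lemma mat_vec_chain_comm:
  assumes "i \<in> {1..n}"
  shows "mat_vec n (chain_comm n w a) v i = chain_op (chain_slope n w a) v i"
proof -
  let ?c = "chain_slope n w a"
  have "chain_comm n w a i j * v j =
      (if j = i + 1 then ?c i * v j else 0) - (if j = i - 1 then ?c j * v j else 0)"
    if "j \<in> {1..n}" for j
    using assms that
    by (auto simp: chain_comm_def commutator_diag_mat chain_D_def chain_slope_def
        algebra_simps diff_divide_distrib)
  then have "mat_vec n (chain_comm n w a) v i =
      (\<Sum>j=1..n. if j = i + 1 then ?c i * v j else 0) - (\<Sum>j=1..n. if j = i - 1 then ?c j * v j else 0)"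
    unfolding mat_vec_def sum_subtractf[symmetric] by (rule sum.cong[OF refl])
  also have "\<dots> = chain_op ?c v i"
    using assms by (auto simp: sum.delta' chain_op_def chain_slope_def)
  finally show ?thesis .
qed

lemma sqnorm_chain_comm:
  "sqnorm n (mat_vec n (chain_comm n w a) v) = sqnorm n (chain_op (chain_slope n w a) v)"
  unfolding sqnorm_def by (intro sum.cong refl) (simp add: mat_vec_chain_comm)

lemma weighted_square_sum_le:
  fixes \<alpha> \<beta> p q X Y :: real
  assumes "0 \<le> \<alpha>" "0 \<le> \<beta>" "\<alpha> = 0 \<or> 0 < X" "\<beta> = 0 \<or> 0 < Y"
  shows "(\<alpha> * p + \<beta> * q)\<^sup>2 \<le> (\<alpha> * X + \<beta> * Y) * (\<alpha> * p\<^sup>2 / X + \<beta> * q\<^sup>2 / Y)"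
proof (cases "\<alpha> = 0 \<or> \<beta> = 0")
  case True
  then show ?thesis using assms by (auto simp: power2_eq_square field_simps)
next
  case False
  then have X: "0 < X" and Y: "0 < Y" using assms by auto
  have "0 \<le> \<alpha> * \<beta> * (X * q - Y * p)\<^sup>2 / (X * Y)"
    using assms X Y by simp
  also have "\<dots> = (\<alpha> * X + \<beta> * Y) * (\<alpha> * p\<^sup>2 / X + \<beta> * q\<^sup>2 / Y) - (\<alpha> * p + \<beta> * q)\<^sup>2"
    using X Y by (simp add: field_simps power2_eq_square)
  finally show ?thesis by simp
qed

lemma norm_diff_sq_le_weighted:
  fixes a b z u :: complex and X Y :: real
  assumes "a = 0 \<or> 0 < X" "b = 0 \<or> 0 < Y"
  shows "(cmod (a * z - b * u))\<^sup>2
    \<le> (cmod a * X + cmod b * Y) * (cmod a * (cmod z)\<^sup>2 / X + cmod b * (cmod u)\<^sup>2 / Y)"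
proof -
  have "cmod (a * z - b * u) \<le> cmod a * cmod z + cmod b * cmod u"
    by (metis norm_mult norm_triangle_ineq4)
  then have "(cmod (a * z - b * u))\<^sup>2 \<le> (cmod a * cmod z + cmod b * cmod u)\<^sup>2"
    by (intro power_mono) auto
  also have "\<dots> \<le> (cmod a * X + cmod b * Y) * (cmod a * (cmod z)\<^sup>2 / X + cmod b * (cmod u)\<^sup>2 / Y)"
    using assms by (intro weighted_square_sum_le) auto
  finally show ?thesis .
qed

lemma sum_shift_eq:
  fixes g :: "nat \<Rightarrow> real"
  assumes "g 1 = g (n + 1)"
  shows "(\<Sum>i=1..n. g (i + 1)) = (\<Sum>i=1..n. g i)"
proof -
  have "(\<Sum>i=1..n. g (Suc i) - g i) = g (Suc n) - g 1"
    by (rule sum_Suc_diff) simp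
  then show ?thesis using assms by (simp add: sum_subtractf)
qed

lemma sqnorm_chain_op_le:
  fixes c v :: "nat \<Rightarrow> complex" and x :: "nat \<Rightarrow> real"
  assumes "c 0 = 0" "c n = 0" and x_pos: "\<And>i. 1 \<le> i \<Longrightarrow> i \<le> n \<Longrightarrow> 0 < x i"
    and schur: "\<And>i. 1 \<le> i \<Longrightarrow> i \<le> n \<Longrightarrow> cmod (c i) * x (i + 1) + cmod (c (i - 1)) * x (i - 1) \<le> \<mu> * x i"
    and "0 \<le> \<mu>"
  shows "sqnorm n (chain_op c v) \<le> \<mu>\<^sup>2 * sqnorm n v"
proof -
  define e where "e i = cmod (c i)" for i
  define u where "u i = cmod (v i)" for i
  define g where "g j = e (j - 1) * x (j - 1) * (u j)\<^sup>2 / x j" for j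
  define h where "h j = e j * x (j + 1) * (u j)\<^sup>2 / x j" for j
  have e0: "e 0 = 0" and en: "e n = 0" using assms(1,2) by (auto simp: e_def)
  have row: "(cmod (chain_op c v i))\<^sup>2 \<le> \<mu> * (g (i + 1) + h (i - 1))"
    if i: "1 \<le> i" "i \<le> n" for i
  proof -
    have nz1: "e i = 0 \<or> 0 < x (i + 1)"
      using x_pos[of "i + 1"] en i by (cases "i = n") auto
    have nz2: "e (i - 1) = 0 \<or> 0 < x (i - 1)"
      using x_pos[of "i - 1"] e0 i by (cases "i = 1") auto
    have "(cmod (chain_op c v i))\<^sup>2 \<le> (e i * x (i + 1) + e (i - 1) * x (i - 1)) *
        (e i * (u (i + 1))\<^sup>2 / x (i + 1) + e (i - 1) * (u (i - 1))\<^sup>2 / x (i - 1))"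
      using nz1 nz2 unfolding chain_op_def e_def u_def by (intro norm_diff_sq_le_weighted) auto
    also have "\<dots> \<le> (\<mu> * x i) *
        (e i * (u (i + 1))\<^sup>2 / x (i + 1) + e (i - 1) * (u (i - 1))\<^sup>2 / x (i - 1))"
      using schur[OF i] nz1 nz2 by (intro mult_right_mono add_nonneg_nonneg) (auto simp: e_def)
    also have "\<dots> = \<mu> * (g (i + 1) + h (i - 1))"
      using i by (simp add: g_def h_def algebra_simps)
    finally show ?thesis .
  qed
  have diag: "g i + h i \<le> \<mu> * (u i)\<^sup>2" if i: "1 \<le> i" "i \<le> n" for i
  proof -
    have "g i + h i = (u i)\<^sup>2 / x i * (e i * x (i + 1) + e (i - 1) * x (i - 1))"
      using x_pos[OF i] by (simp add: g_def h_def field_simps)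
    also have "\<dots> \<le> (u i)\<^sup>2 / x i * (\<mu> * x i)"
      using schur[OF i] x_pos[OF i] by (intro mult_left_mono) (auto simp: e_def)
    finally show ?thesis using x_pos[OF i] by (simp add: mult.commute)
  qed
  have "sqnorm n (chain_op c v) \<le> (\<Sum>i=1..n. \<mu> * (g (i + 1) + h (i - 1)))"
    unfolding sqnorm_def using row by (intro sum_mono) auto
  also have "\<dots> = \<mu> * ((\<Sum>i=1..n. g (i + 1)) + (\<Sum>i=1..n. h (i - 1)))"
    by (simp add: sum_distrib_left[symmetric] sum.distrib)
  also have "(\<Sum>i=1..n. g (i + 1)) = (\<Sum>i=1..n. g i)"
    by (rule sum_shift_eq) (simp add: g_def e0 en)
  also have "(\<Sum>i=1..n. h (i - 1)) = (\<Sum>i=1..n. h i)"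
    using sum_shift_eq[of "\<lambda>i. h (i - 1)" n] by (simp add: h_def e0 en)
  also have "\<mu> * ((\<Sum>i=1..n. g i) + (\<Sum>i=1..n. h i)) \<le> (\<Sum>i=1..n. \<mu> * (\<mu> * (u i)\<^sup>2))"
    unfolding sum.distrib[symmetric] sum_distrib_left
    using diag \<open>0 \<le> \<mu>\<close> by (intro sum_mono mult_left_mono) auto
  finally show ?thesis
    by (simp add: sqnorm_def u_def sum_distrib_left power2_eq_square mult.assoc)
qed

lemma sqnorm_chain_op_slope_le:
  assumes "op_norm n (chain_comm n w a) \<le> 1"
  shows "sqnorm n (chain_op (chain_slope n w a) v) \<le> sqnorm n v"
proof -
  have "sqnorm n (chain_op (chain_slope n w a) v) \<le> (op_norm n (chain_comm n w a))\<^sup>2 * sqnorm n v"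
    using sqnorm_mat_vec_le_op_norm[of n "chain_comm n w a" v] unfolding sqnorm_chain_comm .
  also have "\<dots> \<le> 1 * sqnorm n v"
    using assms op_norm_nonneg sqnorm_nonneg by (intro mult_right_mono) (auto simp: power_le_one)
  finally show ?thesis by simp
qed

lemma chain_op_adjacent_bound:
  assumes contr: "\<And>v. sqnorm n (chain_op c v) \<le> sqnorm n v" and i: "1 \<le> i" "i + 2 \<le> n"
  shows "(cmod (c i))\<^sup>2 + (cmod (c (i + 1)))\<^sup>2 \<le> 1"
proof -
  define v :: "nat \<Rightarrow> complex" where "v j = (if j = i + 1 then 1 else 0)" for j
  have "(cmod (chain_op c v k))\<^sup>2 =
      (if k = i then (cmod (c i))\<^sup>2 else 0) + (if k = i + 2 then (cmod (c (i + 1)))\<^sup>2 else 0)"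
    if "1 \<le> k" for k
    using that by (auto simp: v_def chain_op_def)
  then have "sqnorm n (chain_op c v) = (cmod (c i))\<^sup>2 + (cmod (c (i + 1)))\<^sup>2"
    using i unfolding sqnorm_def by (simp add: sum.distrib sum.delta')
  moreover have "sqnorm n v = 1"
    using i by (simp add: sqnorm_def v_def if_distrib[where f="\<lambda>x. (cmod x)\<^sup>2"] sum.delta' cong: if_cong)
  ultimately show ?thesis
    using contr[of v] by simp
qed

lemma chain_op_aligned_test_vector:
  fixes c :: "nat \<Rightarrow> complex"
  obtains v where "\<And>j. cmod (v j) = (if even j then 1 else 0)"
    and "\<And>k. 1 \<le> k \<Longrightarrow> cmod (chain_op c v k) = (if odd k then cmod (c k) + cmod (c (k - 1)) else 0)"
proof
  define s where "s i = (if c i = 0 then 1 else c i / complex_of_real (cmod (c i)))" for i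
  have s_norm: "cmod (s i) = 1" for i
    by (simp add: s_def norm_divide)
  then have s_nz: "s i \<noteq> 0" for i
    by (metis norm_zero zero_neq_one)
  have c_polar: "c i = complex_of_real (cmod (c i)) * s i" for i
    by (simp add: s_def)
  define P where "P t = (\<Prod>r=1..t. - s (2 * r - 2) / s (2 * r - 1))" for t
  have P_Suc: "P (Suc t) = P t * (- s (2 * t) / s (2 * t + 1))" for t
    by (simp add: P_def)
  have P_norm: "cmod (P t) = 1" for t
    by (simp add: P_def prod_norm[symmetric] norm_divide s_norm)
  define v where "v j = (if even j then P (j div 2) else 0)" for j
  show "cmod (v j) = (if even j then 1 else 0)" for j
    by (simp add: v_def P_norm)
  fix k :: nat assume k: "1 \<le> k"
  show "cmod (chain_op c v k) = (if odd k then cmod (c k) + cmod (c (k - 1)) else 0)"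
  proof (cases "odd k")
    case False
    then show ?thesis using k by (simp add: chain_op_def v_def)
  next
    case True
    then obtain t where t: "k = 2 * t + 1" by (metis oddE)
    have "chain_op c v k = complex_of_real (cmod (c k)) * s k * (P t * (- s (2 * t) / s k))
        - complex_of_real (cmod (c (2 * t))) * s (2 * t) * P t"
      using t c_polar[of k] c_polar[of "2 * t"] by (simp add: chain_op_def v_def P_Suc)
    also have "\<dots> = - (complex_of_real (cmod (c k) + cmod (c (2 * t))) * (s (2 * t) * P t))"
      using s_nz[of k] by (simp add: field_simps)
    finally show ?thesis
      using True t by (simp only: norm_minus_cancel norm_mult norm_of_real s_norm P_norm) simp
  qed
qed

lemma sum_odd_adjacent_pairs:
  fixes g :: "nat \<Rightarrow> real"
  shows "(\<Sum>k=1..n. if odd k then g k + g (k - 1) else 0) = (\<Sum>i=0..n. g i) - (if even n then g n else 0)"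
  by (induction n) auto

lemma count_odd_mult_count_even_le:
  "(\<Sum>k=1..n. if odd k then 1 else 0 :: real) * (\<Sum>k=1..n. if even k then 1 else 0) \<le> (real n / 2)\<^sup>2"
proof -
  let ?odds = "\<Sum>k=1..n. if odd k then 1 else 0 :: real"
  let ?evens = "\<Sum>k=1..n. if even k then 1 else 0 :: real"
  have "?odds + ?evens = (\<Sum>k=1..n. 1)"
    unfolding sum.distrib[symmetric] by (intro sum.cong) auto
  moreover have "?odds * ?evens \<le> ((?odds + ?evens) / 2)\<^sup>2"
    using sum_squares_ge_zero[of "?odds - ?evens" 0] by (simp add: power2_eq_square field_simps)
  ultimately show ?thesis
    by simp
qed

lemma chain_op_l1_bound:
  assumes contr: "\<And>v. sqnorm n (chain_op c v) \<le> sqnorm n v"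
  shows "(\<Sum>i=1..n-1. cmod (c i)) \<le> real n / 2"
proof -
  define e where "e i = cmod (c i)" for i
  define odds where "odds = (\<Sum>k=1..n. if odd k then 1 else 0 :: real)"
  define evens where "evens = (\<Sum>k=1..n. if even k then 1 else 0 :: real)"
  define S where "S = (\<Sum>k=1..n. if odd k then e k + e (k - 1) else 0)"
  obtain v where v_norm: "\<And>j. cmod (v j) = (if even j then 1 else 0)"
    and Tv_norm: "\<And>k. 1 \<le> k \<Longrightarrow> cmod (chain_op c v k) = (if odd k then e k + e (k - 1) else 0)"
    using chain_op_aligned_test_vector unfolding e_def by metis
  have "(\<Sum>k=1..n. (if odd k then e k + e (k - 1) else 0)\<^sup>2) = sqnorm n (chain_op c v)"
    unfolding sqnorm_def by (intro sum.cong refl) (simp add: Tv_norm)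
  also have "\<dots> \<le> sqnorm n v"
    by (rule contr)
  also have "\<dots> = evens"
    unfolding sqnorm_def evens_def by (intro sum.cong refl) (simp add: v_norm)
  finally have Q_le: "(\<Sum>k=1..n. (if odd k then e k + e (k - 1) else 0)\<^sup>2) \<le> evens" .
  have "S\<^sup>2 \<le> odds * (\<Sum>k=1..n. (if odd k then e k + e (k - 1) else 0)\<^sup>2)"
  proof -
    have "(\<Sum>k=1..n. (if odd k then 1 else 0) * (if odd k then e k + e (k - 1) else 0))\<^sup>2
        \<le> (\<Sum>k=1..n. (if odd k then 1 else 0 :: real)\<^sup>2) * (\<Sum>k=1..n. (if odd k then e k + e (k - 1) else 0)\<^sup>2)"
      by (rule Cauchy_Schwarz_ineq_sum)
    moreover have "(\<Sum>k=1..n. (if odd k then 1 else 0) * (if odd k then e k + e (k - 1) else 0)) = S"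
      unfolding S_def by (intro sum.cong) auto
    moreover have "(\<Sum>k=1..n. (if odd k then 1 else 0 :: real)\<^sup>2) = odds"
      unfolding odds_def by (intro sum.cong) auto
    ultimately show ?thesis by simp
  qed
  also have "\<dots> \<le> odds * evens"
    using Q_le by (intro mult_left_mono) (auto simp: odds_def intro: sum_nonneg)
  also have "\<dots> \<le> (real n / 2)\<^sup>2"
    unfolding odds_def evens_def by (rule count_odd_mult_count_even_le)
  finally have "S \<le> real n / 2"
    by (rule power2_le_imp_le) simp
  moreover have "(\<Sum>i=1..n-1. e i) \<le> S"
  proof -
    have "(\<Sum>i=1..n-1. e i) \<le> (\<Sum>i=0..n. e i) - (if even n then e n else 0)"
      by (cases n) (auto simp: e_def sum.atLeast_Suc_atMost[of 0] intro: sum_nonneg)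
    then show ?thesis
      unfolding S_def sum_odd_adjacent_pairs .
  qed
  ultimately show ?thesis
    unfolding e_def by linarith
qed

lemma bdd_above_fw:
  assumes "\<And>b i. P b \<Longrightarrow> i \<in> {1..n-1} \<Longrightarrow> \<bar>b i\<bar> \<le> K" and "\<And>i. i \<in> {1..n-1} \<Longrightarrow> 0 \<le> w i"
  shows "bdd_above {fw n w b | b. P b}"
proof (rule bdd_aboveI)
  fix y assume "y \<in> {fw n w b | b. P b}"
  then obtain b where y: "y = fw n w b" and "P b" by blast
  have "b i \<le> K" if "i \<in> {1..n-1}" for i
    using assms(1)[OF \<open>P b\<close> that] by linarith
  then show "y \<le> (\<Sum>i=1..n-1. w i * K)"
    unfolding y fw_def using assms(2) by (auto intro!: sum_mono mult_left_mono)
qed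

lemma bdd_above_fw_l1_ball:
  assumes "\<And>i. i \<in> {1..n-1} \<Longrightarrow> 0 \<le> w i"
  shows "bdd_above {fw n w b | b. (\<Sum>i=1..n-1. \<bar>b i\<bar>) \<le> r}"
proof (rule bdd_above_fw)
  show "\<bar>b i\<bar> \<le> r" if "(\<Sum>i=1..n-1. \<bar>b i\<bar>) \<le> r" "i \<in> {1..n-1}"
    for b :: "nat \<Rightarrow> real" and i
    using that member_le_sum[of i "{1..n-1}" "\<lambda>i. \<bar>b i\<bar>"] by simp
qed (fact assms)

lemma fw_le_abs:
  assumes "\<And>i. i \<in> {1..n-1} \<Longrightarrow> 0 \<le> w i"
  shows "fw n w b \<le> (\<Sum>i=1..n-1. w i * \<bar>b i\<bar>)"
  unfolding fw_def using assms by (intro sum_mono mult_left_mono) auto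

lemma Sup_fw_box:
  assumes "0 \<le> \<beta>" and w: "\<And>i. i \<in> {1..n-1} \<Longrightarrow> 0 \<le> w i"
  shows "Sup {fw n w b | b. \<forall>i\<in>{1..n-1}. \<bar>b i\<bar> \<le> \<beta>} = \<beta> * (\<Sum>i=1..n-1. w i)"
proof (rule cSup_eq_maximum)
  show "\<beta> * (\<Sum>i=1..n-1. w i) \<in> {fw n w b | b. \<forall>i\<in>{1..n-1}. \<bar>b i\<bar> \<le> \<beta>}"
    using assms(1) by (auto intro!: exI[of _ "\<lambda>_. \<beta>"] simp: fw_def sum_distrib_left mult.commute)
next
  fix y assume "y \<in> {fw n w b | b. \<forall>i\<in>{1..n-1}. \<bar>b i\<bar> \<le> \<beta>}"
  then obtain b where y: "y = fw n w b" and b: "\<forall>i\<in>{1..n-1}. \<bar>b i\<bar> \<le> \<beta>" by blast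
  have "y \<le> (\<Sum>i=1..n-1. w i * \<bar>b i\<bar>)"
    unfolding y using w by (rule fw_le_abs)
  also have "\<dots> \<le> (\<Sum>i=1..n-1. w i * \<beta>)"
    using b w by (intro sum_mono mult_left_mono) auto
  finally show "y \<le> \<beta> * (\<Sum>i=1..n-1. w i)"
    by (simp add: sum_distrib_left mult.commute)
qed

lemma Sup_fw_l1_ball:
  assumes "0 \<le> r" "2 \<le> n" and w: "\<And>i. i \<in> {1..n-1} \<Longrightarrow> 0 \<le> w i"
  shows "Sup {fw n w b | b. (\<Sum>i=1..n-1. \<bar>b i\<bar>) \<le> r} = r * Max (w ` {1..n-1})"
proof -
  let ?M = "Max (w ` {1..n-1})"
  have w_le: "w i \<le> ?M" if "i \<in> {1..n-1}" for i
    using that by (intro Max_ge) auto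
  have "?M \<in> w ` {1..n-1}"
    using assms(2) by (intro Max_in) auto
  then obtain k where k: "k \<in> {1..n-1}" "?M = w k"
    by blast
  let ?b = "\<lambda>i. if i = k then r else 0"
  have "r * ?M = fw n w ?b"
    using k by (simp add: fw_def if_distrib[where f="\<lambda>x. w _ * x"] sum.delta' mult.commute cong: if_cong)
  moreover have "(\<Sum>i=1..n-1. \<bar>?b i\<bar>) \<le> r"
    using k assms(1) by (simp add: if_distrib[where f=abs] sum.delta' cong: if_cong)
  ultimately have attained: "r * ?M \<in> {fw n w b | b. (\<Sum>i=1..n-1. \<bar>b i\<bar>) \<le> r}"
    by blast
  have bound: "y \<le> r * ?M" if y_mem: "y \<in> {fw n w b | b. (\<Sum>i=1..n-1. \<bar>b i\<bar>) \<le> r}" for y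
  proof -
    obtain b where y: "y = fw n w b" and b: "(\<Sum>i=1..n-1. \<bar>b i\<bar>) \<le> r"
      using y_mem by blast
    have "y \<le> (\<Sum>i=1..n-1. w i * \<bar>b i\<bar>)"
      unfolding y using w by (rule fw_le_abs)
    also have "\<dots> \<le> (\<Sum>i=1..n-1. ?M * \<bar>b i\<bar>)"
      using w_le by (intro sum_mono mult_right_mono) auto
    also have "\<dots> \<le> ?M * r"
      unfolding sum_distrib_left[symmetric] using b w_le[of k] w[of k] k
      by (intro mult_left_mono) auto
    finally show ?thesis
      by (simp add: mult.commute)
  qed
  show ?thesis
    using attained bound by (rule cSup_eq_maximum)
qed

definition nc_gaps :: "nat \<Rightarrow> (nat \<Rightarrow> real) \<Rightarrow> real set" where
  "nc_gaps n w = {cmod (a 1 - a n) | a. op_norm n (chain_comm n w a) \<le> 1}"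

lemma nc_length_eq_Sup: "nc_length n w = Sup (nc_gaps n w)"
  by (simp add: nc_length_def dM_def nc_gaps_def chain_comm_def)

lemma cmod_diff_le_fw_slope:
  assumes "1 \<le> n" and w: "\<And>i. 1 \<le> i \<Longrightarrow> i \<le> n - 1 \<Longrightarrow> 0 < w i"
  shows "cmod (a 1 - a n) \<le> fw n w (\<lambda>i. cmod (chain_slope n w a i))"
proof -
  have "a n - a 1 = (\<Sum>i=1..n-1. a (Suc i) - a i)"
    using sum_Suc_diff[of 1 "n - 1" a] assms(1) by simp
  also have "\<dots> = (\<Sum>i=1..n-1. complex_of_real (w i) * chain_slope n w a i)"
    using w by (intro sum.cong) (auto simp: chain_slope_def less_imp_neq[symmetric])
  finally have "cmod (a 1 - a n) = cmod (\<Sum>i=1..n-1. complex_of_real (w i) * chain_slope n w a i)"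
    by (simp add: norm_minus_commute)
  also have "\<dots> \<le> (\<Sum>i=1..n-1. cmod (complex_of_real (w i) * chain_slope n w a i))"
    by (rule norm_sum)
  also have "\<dots> = fw n w (\<lambda>i. cmod (chain_slope n w a i))"
    unfolding fw_def using w by (intro sum.cong) (auto simp: norm_mult abs_of_pos)
  finally show ?thesis .
qed

lemma nc_gap_le_fw:
  assumes "1 \<le> n" and "\<And>i. 1 \<le> i \<Longrightarrow> i \<le> n - 1 \<Longrightarrow> 0 < w i" and "y \<in> nc_gaps n w"
  shows "\<exists>b. y \<le> fw n w b \<and> (\<forall>i\<in>{1..n-2}. \<bar>b i\<bar>\<^sup>2 + \<bar>b (i + 1)\<bar>\<^sup>2 \<le> 1)
    \<and> (\<Sum>i=1..n-1. \<bar>b i\<bar>) \<le> real n / 2"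
proof -
  obtain a where y: "y = cmod (a 1 - a n)" and op: "op_norm n (chain_comm n w a) \<le> 1"
    using assms(3) by (auto simp: nc_gaps_def)
  note contr = sqnorm_chain_op_slope_le[OF op]
  show ?thesis
  proof (intro exI conjI ballI)
    show "y \<le> fw n w (\<lambda>i. cmod (chain_slope n w a i))"
      unfolding y using assms(1,2) by (rule cmod_diff_le_fw_slope)
    show "\<bar>cmod (chain_slope n w a i)\<bar>\<^sup>2 + \<bar>cmod (chain_slope n w a (i + 1))\<bar>\<^sup>2 \<le> 1"
      if "i \<in> {1..n-2}" for i
      using chain_op_adjacent_bound[OF contr] that by auto
    show "(\<Sum>i=1..n-1. \<bar>cmod (chain_slope n w a i)\<bar>) \<le> real n / 2"
      using chain_op_l1_bound[OF contr] by simp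
  qed
qed

definition chain_primitive :: "(nat \<Rightarrow> real) \<Rightarrow> (nat \<Rightarrow> real) \<Rightarrow> nat \<Rightarrow> complex" where
  "chain_primitive w b k = complex_of_real (\<Sum>i=1..<k. w i * b i)"

lemma chain_slope_primitive:
  assumes "\<And>i. 1 \<le> i \<Longrightarrow> i \<le> n - 1 \<Longrightarrow> 0 < w i"
  shows "chain_slope n w (chain_primitive w b) i = (if 1 \<le> i \<and> i \<le> n - 1 then complex_of_real (b i) else 0)"
  using assms[of i] by (auto simp: chain_slope_def chain_primitive_def of_real_diff[symmetric] simp del: of_real_diff)

lemma fw_le_nc_gap:
  assumes "1 \<le> n" and w: "\<And>i. 1 \<le> i \<Longrightarrow> i \<le> n - 1 \<Longrightarrow> 0 < w i"
    and x_pos: "\<And>i. 1 \<le> i \<Longrightarrow> i \<le> n \<Longrightarrow> 0 < x i"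
    and schur: "\<And>i. 1 \<le> i \<Longrightarrow> i \<le> n \<Longrightarrow>
      (if i \<le> n - 1 then \<bar>b i\<bar> * x (i + 1) else 0) + (if 2 \<le> i then \<bar>b (i - 1)\<bar> * x (i - 1) else 0) \<le> x i"
  shows "\<exists>y\<in>nc_gaps n w. fw n w b \<le> y"
proof
  let ?a = "chain_primitive w b"
  let ?c = "chain_slope n w ?a"
  have c_norm: "cmod (?c i) = (if 1 \<le> i \<and> i \<le> n - 1 then \<bar>b i\<bar> else 0)" for i
    by (simp add: chain_slope_primitive[OF w])
  have "sqnorm n (chain_op ?c v) \<le> 1\<^sup>2 * sqnorm n v" for v
  proof (rule sqnorm_chain_op_le[OF _ _ x_pos])
    show "cmod (?c i) * x (i + 1) + cmod (?c (i - 1)) * x (i - 1) \<le> 1 * x i"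
      if "1 \<le> i" "i \<le> n" for i
      using schur[OF that] that by (auto simp: c_norm split: if_splits)
  qed (auto simp: chain_slope_def)
  then have "op_norm n (chain_comm n w ?a) \<le> 1"
    by (intro op_norm_least) (simp_all add: sqnorm_chain_comm)
  then show "cmod (?a 1 - ?a n) \<in> nc_gaps n w"
    unfolding nc_gaps_def by blast
  have "?a n = complex_of_real (fw n w b)"
    using assms(1) by (simp add: chain_primitive_def fw_def atLeastLessThanSuc_atLeastAtMost[symmetric])
  then show "fw n w b \<le> cmod (?a 1 - ?a n)"
    by (simp add: chain_primitive_def)
qed

lemma nc_gaps_nonempty:
  assumes "1 \<le> n" and "\<And>i. 1 \<le> i \<Longrightarrow> i \<le> n - 1 \<Longrightarrow> 0 < w i"
  shows "nc_gaps n w \<noteq> {}"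
proof -
  have "\<exists>y\<in>nc_gaps n w. fw n w (\<lambda>_. 0) \<le> y"
    by (rule fw_le_nc_gap[where x="\<lambda>_. 1"]) (use assms in simp_all)
  then show ?thesis by blast
qed

lemma bdd_above_nc_gaps:
  assumes "1 \<le> n" and w: "\<And>i. 1 \<le> i \<Longrightarrow> i \<le> n - 1 \<Longrightarrow> 0 < w i"
  shows "bdd_above (nc_gaps n w)"
proof -
  have "bdd_above {fw n w b | b. (\<Sum>i=1..n-1. \<bar>b i\<bar>) \<le> real n / 2}"
    by (rule bdd_above_fw_l1_ball) (use w in fastforce)
  then obtain M where M: "\<And>b. (\<Sum>i=1..n-1. \<bar>b i\<bar>) \<le> real n / 2 \<Longrightarrow> fw n w b \<le> M"
    unfolding bdd_above_def by blast
  show ?thesis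
  proof (rule bdd_aboveI)
    fix y assume "y \<in> nc_gaps n w"
    then obtain b where "y \<le> fw n w b" "(\<Sum>i=1..n-1. \<bar>b i\<bar>) \<le> real n / 2"
      using nc_gap_le_fw[of n w, OF assms] by blast
    then show "y \<le> M"
      using M by fastforce
  qed
qed

lemma nc_length_le_L2:
  assumes "1 \<le> n" and "\<And>i. 1 \<le> i \<Longrightarrow> i \<le> n - 1 \<Longrightarrow> 0 < w i"
  shows "nc_length n w \<le> L2 n w"
  unfolding nc_length_eq_Sup L2_def
proof (rule cSup_mono[OF nc_gaps_nonempty[OF assms]])
  show "bdd_above {fw n w b | b. (\<Sum>i=1..n-1. \<bar>b i\<bar>) \<le> real n / 2}"
    by (rule bdd_above_fw_l1_ball) (use assms(2) in fastforce)
  show "\<exists>z\<in>{fw n w b | b. (\<Sum>i=1..n-1. \<bar>b i\<bar>) \<le> real n / 2}. y \<le> z" if "y \<in> nc_gaps n w" for y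
    using nc_gap_le_fw[OF assms that] by blast
qed

lemma L2_eq:
  assumes "2 \<le> n" and "\<And>i. 1 \<le> i \<Longrightarrow> i \<le> n - 1 \<Longrightarrow> 0 < w i"
  shows "L2 n w = real n / 2 * Max (w ` {1..n-1})"
  unfolding L2_def using assms by (intro Sup_fw_l1_ball) fastforce+

lemma abs_le_one_of_adjacent_sq:
  fixes b :: "nat \<Rightarrow> real"
  assumes "3 \<le> n" and b: "\<forall>j\<in>{1..n-2}. \<bar>b j\<bar>\<^sup>2 + \<bar>b (j + 1)\<bar>\<^sup>2 \<le> 1" and "i \<in> {1..n-1}"
  shows "\<bar>b i\<bar> \<le> 1"
proof -
  define j where "j = min i (n - 2)"
  have j: "j \<in> {1..n-2}" "i = j \<or> i = j + 1"
    using assms(1,3) by (auto simp: j_def)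
  have pair: "\<bar>b j\<bar>\<^sup>2 + \<bar>b (j + 1)\<bar>\<^sup>2 \<le> 1"
    using bspec[OF b j(1)] .
  have "\<bar>b i\<bar>\<^sup>2 \<le> 1"
  proof (cases "i = j")
    case True
    have "\<bar>b i\<bar>\<^sup>2 \<le> \<bar>b j\<bar>\<^sup>2 + \<bar>b (j + 1)\<bar>\<^sup>2"
      unfolding True by simp
    then show ?thesis using pair by linarith
  next
    case False
    then have "\<bar>b i\<bar>\<^sup>2 \<le> \<bar>b j\<bar>\<^sup>2 + \<bar>b (j + 1)\<bar>\<^sup>2"
      using j(2) by simp
    then show ?thesis using pair by linarith
  qed
  then show ?thesis
    by (simp add: abs_square_le_1)
qed

lemma nc_length_le_L1:
  assumes "3 \<le> n" and w: "\<And>i. 1 \<le> i \<Longrightarrow> i \<le> n - 1 \<Longrightarrow> 0 < w i"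
  shows "nc_length n w \<le> L1 n w"
  unfolding nc_length_eq_Sup L1_def
proof (rule cSup_mono[OF nc_gaps_nonempty])
  show "bdd_above {fw n w b | b. \<forall>i\<in>{1..n-2}. \<bar>b i\<bar>\<^sup>2 + \<bar>b (i + 1)\<bar>\<^sup>2 \<le> 1}"
  proof (rule bdd_above_fw)
    show "\<bar>b i\<bar> \<le> 1" if "\<forall>i\<in>{1..n-2}. \<bar>b i\<bar>\<^sup>2 + \<bar>b (i + 1)\<bar>\<^sup>2 \<le> 1" "i \<in> {1..n-1}"
      for b :: "nat \<Rightarrow> real" and i
      using abs_le_one_of_adjacent_sq[OF assms(1) that] .
  qed (use w in fastforce)
  show "\<exists>z\<in>{fw n w b | b. \<forall>i\<in>{1..n-2}. \<bar>b i\<bar>\<^sup>2 + \<bar>b (i + 1)\<bar>\<^sup>2 \<le> 1}. y \<le> z"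
    if y_mem: "y \<in> nc_gaps n w" for y
  proof -
    obtain b where "y \<le> fw n w b" "\<forall>i\<in>{1..n-2}. \<bar>b i\<bar>\<^sup>2 + \<bar>b (i + 1)\<bar>\<^sup>2 \<le> 1"
      using nc_gap_le_fw[OF _ w y_mem] assms(1) by auto
    then show ?thesis by blast
  qed
qed (use assms in auto)

lemma adjacent_sum_schur:
  fixes b :: "nat \<Rightarrow> real"
  assumes "3 \<le> n" and b: "\<forall>j\<in>{1..n-2}. \<bar>b j\<bar> + \<bar>b (j + 1)\<bar> \<le> 1" and i: "1 \<le> i" "i \<le> n"
  shows "(if i \<le> n - 1 then \<bar>b i\<bar> * 1 else 0) + (if 2 \<le> i then \<bar>b (i - 1)\<bar> * 1 else 0) \<le> 1"
proof -
  consider "i = 1" | "i = n" | "2 \<le> i" "i \<le> n - 1"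
    using i by linarith
  then show ?thesis
  proof cases
    case 1
    have "1 \<in> {1..n-2}" using assms(1) by simp
    from bspec[OF b this] have "\<bar>b 1\<bar> + \<bar>b 2\<bar> \<le> 1" by (simp add: numeral_2_eq_2)
    then have "\<bar>b 1\<bar> \<le> 1" using abs_ge_zero[of "b 2"] by linarith
    with 1 show ?thesis by simp
  next
    case 2
    have "n - 2 \<in> {1..n-2}" "n - 2 + 1 = n - 1" using assms(1) by auto
    from bspec[OF b this(1)] this(2) have "\<bar>b (n - 2)\<bar> + \<bar>b (n - 1)\<bar> \<le> 1" by simp
    then have "\<bar>b (n - 1)\<bar> \<le> 1" using abs_ge_zero[of "b (n - 2)"] by linarith
    moreover have "\<not> n \<le> n - 1" "2 \<le> n" using assms(1) by auto
    ultimately show ?thesis using 2 by simp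
  next
    case 3
    then have "i - 1 \<in> {1..n-2}" "i - 1 + 1 = i" by auto
    from bspec[OF b this(1)] this(2) have "\<bar>b (i - 1)\<bar> + \<bar>b i\<bar> \<le> 1" by simp
    with 3 show ?thesis by simp
  qed
qed

lemma R1_le_nc_length:
  assumes "3 \<le> n" and w: "\<And>i. 1 \<le> i \<Longrightarrow> i \<le> n - 1 \<Longrightarrow> 0 < w i"
  shows "R1 n w \<le> nc_length n w"
  unfolding nc_length_eq_Sup R1_def
proof (rule cSup_mono)
  show "{fw n w b | b. \<forall>i\<in>{1..n-2}. \<bar>b i\<bar> + \<bar>b (i + 1)\<bar> \<le> 1} \<noteq> {}"
    by (auto intro!: exI[of _ "\<lambda>_. 0"])
  show "bdd_above (nc_gaps n w)"
    using assms by (intro bdd_above_nc_gaps) auto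
  fix y assume "y \<in> {fw n w b | b. \<forall>i\<in>{1..n-2}. \<bar>b i\<bar> + \<bar>b (i + 1)\<bar> \<le> 1}"
  then obtain b where y: "y = fw n w b" and b: "\<forall>i\<in>{1..n-2}. \<bar>b i\<bar> + \<bar>b (i + 1)\<bar> \<le> 1"
    by blast
  show "\<exists>z\<in>nc_gaps n w. y \<le> z"
    unfolding y
    by (rule fw_le_nc_gap[where x="\<lambda>_. 1"]) (use assms adjacent_sum_schur[OF assms(1) b] in auto)
qed

lemma sin_add_sin_diff: "sin (t + \<theta>) + sin (t - \<theta>) = 2 * cos \<theta> * sin (t :: real)"
  by (simp add: sin_add sin_diff)

lemma R2_eq:
  assumes "1 \<le> n" and "\<And>i. 1 \<le> i \<Longrightarrow> i \<le> n - 1 \<Longrightarrow> 0 < w i"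
  shows "R2 n w = geo_length n w / (2 * cos (pi / (real n + 1)))"
proof -
  have "0 \<le> cos (pi / (real n + 1))"
    using assms(1) by (intro cos_ge_zero) (auto simp: field_simps)
  then have "R2 n w = 1 / (2 * cos (pi / (real n + 1))) * (\<Sum>i=1..n-1. w i)"
    unfolding R2_def using assms(2) by (intro Sup_fw_box) fastforce+
  then show ?thesis
    by (simp add: geo_length_def)
qed

lemma path_sine_vector_schur:
  fixes n i :: nat
  defines "\<theta> \<equiv> pi / (real n + 1)"
  assumes "2 \<le> n" "1 \<le> i" "i \<le> n"
  shows "0 < sin (real i * \<theta>)"
    and "(if i \<le> n - 1 then \<bar>1 / (2 * cos \<theta>)\<bar> * sin (real (i + 1) * \<theta>) else 0)
       + (if 2 \<le> i then \<bar>1 / (2 * cos \<theta>)\<bar> * sin (real (i - 1) * \<theta>) else 0) \<le> sin (real i * \<theta>)"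
proof -
  have "0 < \<theta>" "\<theta> < pi / 2"
    using assms(2) by (auto simp: \<theta>_def field_simps)
  then have "0 < cos \<theta>"
    by (intro cos_gt_zero_pi) auto
  have "real i * \<theta> < (real n + 1) * \<theta>"
    using assms(4) \<open>0 < \<theta>\<close> by (intro mult_strict_right_mono) auto
  then show "0 < sin (real i * \<theta>)"
    using assms(3) \<open>0 < \<theta>\<close> by (intro sin_gt_zero) (auto simp: \<theta>_def)
  let ?\<beta> = "1 / (2 * cos \<theta>)"
  have "real (n + 1) * \<theta> = pi"
    by (simp add: \<theta>_def add.commute)
  then have "(if i \<le> n - 1 then \<bar>?\<beta>\<bar> * sin (real (i + 1) * \<theta>) else 0) = ?\<beta> * sin (real (i + 1) * \<theta>)"
    using assms(3,4) \<open>0 < cos \<theta>\<close> by (cases "i = n") auto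
  moreover have "(if 2 \<le> i then \<bar>?\<beta>\<bar> * sin (real (i - 1) * \<theta>) else 0) = ?\<beta> * sin (real (i - 1) * \<theta>)"
    using assms(3) \<open>0 < cos \<theta>\<close> by (cases "i = 1") auto
  moreover have "sin (real (i + 1) * \<theta>) + sin (real (i - 1) * \<theta>) = 2 * cos \<theta> * sin (real i * \<theta>)"
    using assms(3) sin_add_sin_diff[of "real i * \<theta>" \<theta>] by (simp add: algebra_simps of_nat_diff)
  ultimately show "(if i \<le> n - 1 then \<bar>?\<beta>\<bar> * sin (real (i + 1) * \<theta>) else 0)
       + (if 2 \<le> i then \<bar>?\<beta>\<bar> * sin (real (i - 1) * \<theta>) else 0) \<le> sin (real i * \<theta>)"
    using \<open>0 < cos \<theta>\<close> by (simp add: add_divide_distrib[symmetric])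
qed

lemma R2_le_nc_length:
  assumes "2 \<le> n" and w: "\<And>i. 1 \<le> i \<Longrightarrow> i \<le> n - 1 \<Longrightarrow> 0 < w i"
  shows "R2 n w \<le> nc_length n w"
proof -
  let ?\<beta> = "1 / (2 * cos (pi / (real n + 1)))"
  have "1 \<le> n"
    using assms(1) by simp
  have "\<exists>y\<in>nc_gaps n w. fw n w (\<lambda>_. ?\<beta>) \<le> y"
    by (rule fw_le_nc_gap[where x="\<lambda>i. sin (real i * (pi / (real n + 1)))"])
      (use \<open>1 \<le> n\<close> w path_sine_vector_schur[OF assms(1)] in auto)
  then obtain y where y: "y \<in> nc_gaps n w" "fw n w (\<lambda>_. ?\<beta>) \<le> y"
    by blast
  have "y \<le> nc_length n w"
    unfolding nc_length_eq_Sup using y(1) bdd_above_nc_gaps[of n w, OF \<open>1 \<le> n\<close> w]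
    by (rule cSup_upper)
  moreover have "R2 n w = fw n w (\<lambda>_. ?\<beta>)"
    using R2_eq[of n w, OF \<open>1 \<le> n\<close> w] by (simp add: fw_def geo_length_def sum_divide_distrib)
  ultimately show ?thesis
    using y(2) by linarith
qed

theorem mainTheorem4:
  fixes n :: nat and w :: "nat \<Rightarrow> real"
  assumes "n \<ge> 3"
    and "\<And>i. 1 \<le> i \<Longrightarrow> i \<le> n - 1 \<Longrightarrow> w i > 0"
  shows "max (R1 n w) (R2 n w) \<le> nc_length n w
       \<and> nc_length n w \<le> min (L1 n w) (L2 n w)
       \<and> R2 n w = geo_length n w / (2 * cos (pi / (real n + 1)))
       \<and> L2 n w = real n / 2 * Max (w ` {1..n-1})"
proof -
  note w = assms(2)
  have "1 \<le> n" "2 \<le> n"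
    using assms(1) by auto
  have "R1 n w \<le> nc_length n w"
    using R1_le_nc_length[of n w, OF assms(1) w] .
  moreover have "R2 n w \<le> nc_length n w"
    using R2_le_nc_length[of n w, OF \<open>2 \<le> n\<close> w] .
  moreover have "nc_length n w \<le> L1 n w"
    using nc_length_le_L1[of n w, OF assms(1) w] .
  moreover have "nc_length n w \<le> L2 n w"
    using nc_length_le_L2[of n w, OF \<open>1 \<le> n\<close> w] .
  moreover have "R2 n w = geo_length n w / (2 * cos (pi / (real n + 1)))"
    using R2_eq[of n w, OF \<open>1 \<le> n\<close> w] .
  moreover have "L2 n w = real n / 2 * Max (w ` {1..n-1})"
    using L2_eq[of n w, OF \<open>2 \<le> n\<close> w] .
  ultimately show ?thesis
    by simp
qed

end
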